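(* Let $D\subseteq\mathbb{R}^{p+2}$ be an open set invariant under $(\mathbf{x}_p,r)\mapsto(\mathbf{x}_p,-r)$ and let $f(\mathbf{x})=F_1(\mathbf{x}')+\underline{\omega}F_2(\mathbf{x}')$ be generalized partial-slice regular on $\Omega_D$. For $k\in\mathbb{N}$ set $A_k(\mathbf{x}')=(\frac1r\partial_r)^kF_1(\mathbf{x}')$ and $B_k(\mathbf{x}')=(\partial_r\frac1r)^kF_2(\mathbf{x}')$. Then for all $k\in\mathbb{N}$ and $\mathbf{x}\in\Omega_D$, $$D_{\mathbf{x}_p}A_k(\mathbf{x}')-\partial_rB_k(\mathbf{x}')=\frac{2k}{r}B_k(\mathbf{x}'),\qquad \overline{D}_{\mathbf{x}_p}B_k(\mathbf{x}')+\partial_rA_k(\mathbf{x}')=0,$$ with values at $r=0$ understood as limits $r\to0$.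
   Context: Let $\mathbb{A}$ be a real alternative algebra (the associator $[a,b,c]=(ab)c-a(bc)$ is an alternating trilinear function) with unity $1$, of finite real dimension $d>1$, equipped with an anti-involution $a\mapsto a^c$ (real linear, $a^c=a$ for real $a$, $(a^c)^c=a$, $(ab)^c=b^ca^c$). Let $t(x)=x+x^c$, $n(x)=xx^c$, $\mathbb{S}_{\mathbb{A}}=\{x: t(x)=0,\ n(x)=1\}$ (assumed nonempty) and $Q_{\mathbb{A}}=\mathbb{R}\cup\{x: t(x)\in\mathbb{R},\ n(x)\in\mathbb{R},\ 4n(x)>t(x)^2\}$. Let $M$ be a real subspace with $\mathbb{R}\subsetneq M\subseteq Q_{\mathbb{A}}$ having a basis $(v_0,\dots,v_m)$, $m\ge1$, $v_0=1$, $v_s\in\mathbb{S}_{\mathbb{A}}$, $v_sv_t=-v_tv_s$ for distinct $s,t\ge1$; complete it to a basis of $\mathbb{A}$ with associated Euclidean norm. Identify $x=\sum x_sv_s\in M$ with $(x_0,\dots,x_m)\in\mathbb{R}^{m+1}$; differentiate componentwise. Fix $p\in\{0,\dots,m-1\}$, $q=m-p$; $\mathbf{x}=\mathbf{x}_p+\underline{\mathbf{x}}_q$ with $\mathbf{x}_p=\sum_{s=0}^px_sv_s\in\mathbb{R}^{p+1}$, $\underline{\mathbf{x}}_q=\sum_{s=p+1}^m x_sv_s$; $\mathbb{S}=\{\sum_{s=p+1}^m x_sv_s:\sum x_s^2=1\}$; $\underline{\mathbf{x}}_q=r\underline{\omega}$, $r=|\underline{\mathbf{x}}_q|$; $\mathbf{x}'=(\mathbf{x}_p,r)$.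 $D_{\mathbf{x}_p}f=\sum_{s=0}^p v_s\partial_{x_s}f$, $\overline{D}_{\mathbf{x}_p}f=\partial_{x_0}f-\sum_{s=1}^pv_s\partial_{x_s}f$; $(\partial_r\frac1r)G=\partial_r(G/r)$. $\Omega_D=\{\mathbf{x}_p+r\underline{\omega}:(\mathbf{x}_p,r)\in D,\ r\ge0,\ \underline{\omega}\in\mathbb{S}\}$. A stem function $(F_1,F_2):D\to\mathbb{A}^2$ has $F_1$ even and $F_2$ odd in $r$ and induces $f(\mathbf{x}_p+r\underline{\omega})=F_1(\mathbf{x}')+\underline{\omega}F_2(\mathbf{x}')$; $f$ is generalized partial-slice regular if $F\in C^1$ and $D_{\mathbf{x}_p}F_1-\partial_rF_2=0$, $\overline{D}_{\mathbf{x}_p}F_2+\partial_rF_1=0$ on $D$ (such $F_1,F_2$ are real analytic). *)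

theory Defs
  imports "HOL-Analysis.Analysis"
begin

text \<open>The real alternative algebra A is modelled as a finite-dimensional real
vector space (type 'a, euclidean_space) with a bilinear product mul, a unity one
(real numbers are embedded as c *R one) and an anti-involution cj.\<close>

definition associator :: "('a::real_vector \<Rightarrow> 'a \<Rightarrow> 'a) \<Rightarrow> 'a \<Rightarrow> 'a \<Rightarrow> 'a \<Rightarrow> 'a" where
  "associator mul a b c = mul (mul a b) c - mul a (mul b c)"

definition alt_algebra_inv ::
  "('a::euclidean_space \<Rightarrow> 'a \<Rightarrow> 'a) \<Rightarrow> 'a \<Rightarrow> ('a \<Rightarrow> 'a) \<Rightarrow> bool" where
  "alt_algebra_inv mul one cj \<longleftrightarrow>
     bilinear mul \<and>
     (\<forall>x. mul one x = x \<and> mul x one = x) \<and>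
     (\<forall>a b c. associator mul b a c = - associator mul a b c \<and>
              associator mul a c b = - associator mul a b c \<and>
              associator mul c b a = - associator mul a b c) \<and>
     linear cj \<and>
     (\<forall>c::real. cj (c *\<^sub>R one) = c *\<^sub>R one) \<and>
     (\<forall>x. cj (cj x) = x) \<and>
     (\<forall>x y. cj (mul x y) = mul (cj y) (cj x))"

definition is_real :: "'a::real_vector \<Rightarrow> 'a \<Rightarrow> bool" where
  "is_real one x \<longleftrightarrow> (\<exists>c::real. x = c *\<^sub>R one)"

definition trA :: "('a::real_vector \<Rightarrow> 'a) \<Rightarrow> 'a \<Rightarrow> 'a" where
  "trA cj x = x + cj x"

definition nA :: "('a \<Rightarrow> 'a \<Rightarrow> 'a) \<Rightarrow> ('a \<Rightarrow> 'a) \<Rightarrow> 'a \<Rightarrow> 'a" where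
  "nA mul cj x = mul x (cj x)"

definition SA :: "('a::real_vector \<Rightarrow> 'a \<Rightarrow> 'a) \<Rightarrow> 'a \<Rightarrow> ('a \<Rightarrow> 'a) \<Rightarrow> 'a set" where
  "SA mul one cj = {x. trA cj x = 0 \<and> nA mul cj x = one}"

definition QA :: "('a::real_vector \<Rightarrow> 'a \<Rightarrow> 'a) \<Rightarrow> 'a \<Rightarrow> ('a \<Rightarrow> 'a) \<Rightarrow> 'a set" where
  "QA mul one cj = range (\<lambda>c::real. c *\<^sub>R one) \<union>
     {x. \<exists>a b::real. trA cj x = a *\<^sub>R one \<and> nA mul cj x = b *\<^sub>R one \<and> 4 * b > a\<^sup>2}"

definition slice_basis ::
  "('a::euclidean_space \<Rightarrow> 'a \<Rightarrow> 'a) \<Rightarrow> 'a \<Rightarrow> ('a \<Rightarrow> 'a) \<Rightarrow> (nat \<Rightarrow> 'a) \<Rightarrow> nat \<Rightarrow> bool" where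
  "slice_basis mul one cj v m \<longleftrightarrow>
     1 \<le> m \<and> v 0 = one \<and>
     (\<forall>s\<in>{1..m}. v s \<in> SA mul one cj) \<and>
     (\<forall>s\<in>{1..m}. \<forall>t\<in>{1..m}. s \<noteq> t \<longrightarrow> mul (v s) (v t) = - mul (v t) (v s)) \<and>
     inj_on v {0..m} \<and> independent (v ` {0..m}) \<and>
     span (v ` {0..m}) \<subseteq> QA mul one cj"

text \<open>Points x' = (x_p, r) of D are pairs: x_p = sum_{s<=p} x_s v_s (an element of
span{v_0..v_p}, identified with R^{p+1}) and r real.  The partial derivative in
the coordinate x_s is the directional derivative along (v s, 0); the partial
derivative in r is along (0, 1).\<close>

definition pd :: "('a::real_normed_vector \<times> real \<Rightarrow> 'b::real_normed_vector) \<Rightarrow> 'a \<times> real \<Rightarrow> 'a \<times> real \<Rightarrow> 'b" where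
  "pd F u x = vector_derivative (\<lambda>t. F (x + t *\<^sub>R u)) (at 0)"

definition dirs :: "(nat \<Rightarrow> 'a::real_vector) \<Rightarrow> nat \<Rightarrow> ('a \<times> real) set" where
  "dirs v p = {(v s, 0) | s. s \<le> p} \<union> {(0, 1)}"

definition dr :: "('a::real_normed_vector \<times> real \<Rightarrow> 'b::real_normed_vector) \<Rightarrow> 'a \<times> real \<Rightarrow> 'b" where
  "dr F x = pd F (0, 1) x"

definition C1_on :: "('a::real_normed_vector \<times> real) set \<Rightarrow> ('a \<times> real) set \<Rightarrow> ('a \<times> real \<Rightarrow> 'b::real_normed_vector) \<Rightarrow> bool" where
  "C1_on U D F \<longleftrightarrow> continuous_on D F \<and>
     (\<forall>u\<in>U. (\<forall>x\<in>D. (\<lambda>t. F (x + t *\<^sub>R u)) differentiable (at 0)) \<and> continuous_on D (pd F u))"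

primrec iter_pd :: "('a::real_normed_vector \<times> real) list \<Rightarrow> ('a \<times> real \<Rightarrow> 'b::real_normed_vector) \<Rightarrow> 'a \<times> real \<Rightarrow> 'b" where
  "iter_pd [] F = F"
| "iter_pd (u # us) F = pd (iter_pd us F) u"

definition Cinf_on :: "('a::real_normed_vector \<times> real) set \<Rightarrow> ('a \<times> real) set \<Rightarrow> ('a \<times> real \<Rightarrow> 'b::real_normed_vector) \<Rightarrow> bool" where
  "Cinf_on U D F \<longleftrightarrow> (\<forall>us. set us \<subseteq> U \<longrightarrow> C1_on U D (iter_pd us F))"

definition Dxp :: "('a::real_normed_vector \<Rightarrow> 'a \<Rightarrow> 'a) \<Rightarrow> (nat \<Rightarrow> 'a) \<Rightarrow> nat \<Rightarrow> ('a \<times> real \<Rightarrow> 'a) \<Rightarrow> 'a \<times> real \<Rightarrow> 'a" where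
  "Dxp mul v p F x = (\<Sum>s=0..p. mul (v s) (pd F (v s, 0) x))"

definition Dxp_bar :: "('a::real_normed_vector \<Rightarrow> 'a \<Rightarrow> 'a) \<Rightarrow> (nat \<Rightarrow> 'a) \<Rightarrow> nat \<Rightarrow> ('a \<times> real \<Rightarrow> 'a) \<Rightarrow> 'a \<times> real \<Rightarrow> 'a" where
  "Dxp_bar mul v p F x = pd F (v 0, 0) x - (\<Sum>s=1..p. mul (v s) (pd F (v s, 0) x))"

definition gps_regular_stem ::
  "('a::real_normed_vector \<Rightarrow> 'a \<Rightarrow> 'a) \<Rightarrow> (nat \<Rightarrow> 'a) \<Rightarrow> nat \<Rightarrow> ('a \<times> real) set \<Rightarrow>
   ('a \<times> real \<Rightarrow> 'a) \<Rightarrow> ('a \<times> real \<Rightarrow> 'a) \<Rightarrow> bool" where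
  "gps_regular_stem mul v p D F1 F2 \<longleftrightarrow>
     (\<forall>y r. (y, r) \<in> D \<longrightarrow> F1 (y, - r) = F1 (y, r) \<and> F2 (y, - r) = - F2 (y, r)) \<and>
     C1_on (dirs v p) D F1 \<and> C1_on (dirs v p) D F2 \<and>
     (\<forall>x\<in>D. Dxp mul v p F1 x - dr F2 x = 0 \<and> Dxp_bar mul v p F2 x + dr F1 x = 0)"

primrec Ak_seq :: "('a::real_normed_vector \<times> real \<Rightarrow> 'a) \<Rightarrow> nat \<Rightarrow> 'a \<times> real \<Rightarrow> 'a" where
  "Ak_seq F1 0 = F1"
| "Ak_seq F1 (Suc k) = (\<lambda>x. (1 / snd x) *\<^sub>R dr (Ak_seq F1 k) x)"

primrec Bk_seq :: "('a::real_normed_vector \<times> real \<Rightarrow> 'a) \<Rightarrow> nat \<Rightarrow> 'a \<times> real \<Rightarrow> 'a" where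
  "Bk_seq F2 0 = F2"
| "Bk_seq F2 (Suc k) = dr (\<lambda>x. (1 / snd x) *\<^sub>R Bk_seq F2 k x)"

end

theory Submission
  imports Defs
begin

text \<open>For \<open>r > 0\<close> the identities are proved by induction on \<open>k\<close>. The operators \<open>Dxp\<close> and
  \<open>Dxp_bar\<close> only differentiate in the \<open>x\<^sub>p\<close>-directions, so they commute with multiplication by
  functions of \<open>r\<close> and, by Schwarz's theorem for the smooth functions \<open>A\<^sub>k\<close> and \<open>B\<^sub>k\<close>, with
  \<open>\<partial>\<^sub>r\<close>. The induction step then reduces to a computation along the radial line: for
  \<open>\<beta> = B\<^sub>k\<close> one has \<open>(1/r) \<partial>\<^sub>r (\<partial>\<^sub>r \<beta> + (2k/r) \<beta>) - \<partial>\<^sub>r\<^sup>2 (\<beta>/r) = (2(k+1)/r) \<partial>\<^sub>r (\<beta>/r)\<close>,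
  and \<open>Dxp_bar (B\<^sub>k/r) = - A\<^sub>k\<^sub>+\<^sub>1\<close>.

  At \<open>r = 0\<close>, the restrictions of \<open>F\<^sub>1\<close> and \<open>F\<^sub>2\<close> to a line through the axis are smooth, even and
  odd respectively. By Hadamard's lemma \<open>(1/r) \<partial>\<^sub>r\<close> preserves smooth even functions and
  \<open>\<partial>\<^sub>r (1/r)\<close> preserves smooth odd ones, so \<open>\<partial>\<^sub>r A\<^sub>k\<close>, \<open>\<partial>\<^sub>r B\<^sub>k\<close> and \<open>B\<^sub>k/r\<close> extend continuously
  to \<open>r = 0\<close>; the identities for \<open>r > 0\<close> then give the limits of \<open>Dxp A\<^sub>k\<close> and \<open>Dxp_bar B\<^sub>k\<close>.\<close>

section \<open>Calculus of one real variable\<close>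

definition vderiv :: "(real \<Rightarrow> 'b::real_normed_vector) \<Rightarrow> real \<Rightarrow> 'b" where
  "vderiv f t = vector_derivative f (at t)"

lemma has_vderiv: "f differentiable (at t) \<Longrightarrow> (f has_vector_derivative vderiv f t) (at t)"
  by (simp add: vderiv_def vector_derivative_works[symmetric])

lemma vderiv_eqI: "(f has_vector_derivative D) (at t) \<Longrightarrow> vderiv f t = D"
  by (simp add: vderiv_def vector_derivative_at)

lemma vderiv_cong_open:
  assumes "open N" "t \<in> N" "\<And>s. s \<in> N \<Longrightarrow> f s = g s"
  shows "vderiv f t = vderiv g t"
  unfolding vderiv_def
  by (rule vector_derivative_cong_eq) (use assms in \<open>auto simp: eventually_nhds\<close>)

lemma vderiv_of_even:
  assumes even: "\<forall>s\<in>{-d<..<d}. f (- s) = f s" and t: "t \<in> {-d<..<d}"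
    and diff: "f differentiable (at t)"
  shows "vderiv f (- t) = - vderiv f t"
proof (rule vderiv_eqI)
  have "((f \<circ> uminus) has_vector_derivative (- 1) *\<^sub>R vderiv f t) (at (- t))"
    by (rule vector_diff_chain_at) (auto intro!: derivative_eq_intros simp: has_vderiv[OF diff])
  then have "((\<lambda>s. f (- s)) has_vector_derivative - vderiv f t) (at (- t))"
    by (simp add: o_def)
  then show "(f has_vector_derivative - vderiv f t) (at (- t))"
    by (rule has_vector_derivative_transform_within_open[of _ _ _ "{-d<..<d}"])
       (use even t in auto)
qed

definition smooth_on :: "real set \<Rightarrow> (real \<Rightarrow> 'b::real_normed_vector) \<Rightarrow> bool" where
  "smooth_on I f \<longleftrightarrow> (\<forall>n. \<forall>t\<in>I. (vderiv ^^ n) f differentiable (at t))"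

lemma funpow_vderiv: "(vderiv ^^ n) (vderiv f) = (vderiv ^^ Suc n) f"
  by (simp only: funpow_Suc_right o_apply)

lemma smooth_on_vderiv: "smooth_on I f \<Longrightarrow> smooth_on I (vderiv f)"
  unfolding smooth_on_def funpow_vderiv by blast

lemma smooth_on_differentiable: "smooth_on I f \<Longrightarrow> t \<in> I \<Longrightarrow> f differentiable (at t)"
  unfolding smooth_on_def by (metis funpow.simps(1) id_apply)

lemma smooth_on_has_vderiv:
  "smooth_on I f \<Longrightarrow> t \<in> I \<Longrightarrow>
    ((vderiv ^^ n) f has_vector_derivative (vderiv ^^ Suc n) f t) (at t)"
  unfolding smooth_on_def by (simp add: has_vderiv)

lemma smooth_on_continuous_on: "smooth_on I f \<Longrightarrow> continuous_on I ((vderiv ^^ n) f)"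
  unfolding smooth_on_def
  by (blast intro: continuous_at_imp_continuous_on differentiable_imp_continuous_within)

lemma has_vector_derivative_integral_param:
  fixes f fx :: "real \<Rightarrow> real \<Rightarrow> 'b::banach"
  assumes x0: "x0 \<in> {a<..<b}"
    and fx: "\<And>x s. x \<in> {a<..<b} \<Longrightarrow> s \<in> {0..1} \<Longrightarrow>
      ((\<lambda>x. f x s) has_vector_derivative fx x s) (at x)"
    and cont_f: "\<And>x. x \<in> {a<..<b} \<Longrightarrow> continuous_on {0..1} (f x)"
    and cont_fx: "continuous_on ({a<..<b} \<times> {0..1}) (\<lambda>(x, s). fx x s)"
  shows "((\<lambda>x. integral {0..1} (f x)) has_vector_derivative integral {0..1} (fx x0)) (at x0)"
proof -
  have "((\<lambda>x. integral (cbox 0 1) (f x)) has_vector_derivative integral (cbox 0 1) (fx x0))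
      (at x0 within {a<..<b})"
  proof (rule leibniz_rule_vector_derivative)
    fix x s :: real assume "x \<in> {a<..<b}" "s \<in> cbox 0 1"
    then show "((\<lambda>x. f x s) has_vector_derivative fx x s) (at x within {a<..<b})"
      by (auto intro: has_vector_derivative_at_within[OF fx])
  next
    fix x assume "x \<in> {a<..<b}"
    then show "f x integrable_on cbox 0 1"
      unfolding box_real(2) by (intro integrable_continuous_real cont_f)
  next
    show "continuous_on ({a<..<b} \<times> cbox 0 1) (\<lambda>(x, s). fx x s)"
      unfolding box_real(2) by (rule cont_fx)
  qed (use x0 convex_real_interval in auto)
  moreover have "at x0 within {a<..<b} = at x0"
    by (rule at_within_open[OF x0]) simp
  ultimately show ?thesis
    by (simp only: box_real(2))
qed

lemma mult_in_symmetric_interval: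
  fixes s t :: real
  assumes "s \<in> {0..1}" "t \<in> {-d<..<d}"
  shows "s * t \<in> {-d<..<d}"
proof -
  have "\<bar>s * t\<bar> \<le> \<bar>t\<bar>"
    using assms by (auto simp: abs_mult intro: mult_left_le_one_le)
  then show ?thesis
    using assms by auto
qed

lemma has_vector_derivative_dilation_integral:
  fixes h :: "real \<Rightarrow> 'b::banach"
  assumes h: "smooth_on {-d<..<d} h" and r: "r \<in> {-d<..<d}"
  shows "((\<lambda>r. integral {0..1} (\<lambda>s. s ^ n *\<^sub>R (vderiv ^^ Suc n) h (s * r))) has_vector_derivative
           integral {0..1} (\<lambda>s. s ^ Suc n *\<^sub>R (vderiv ^^ Suc (Suc n)) h (s * r))) (at r)"
proof (rule has_vector_derivative_integral_param[OF r])
  have cont: "continuous_on ({-d<..<d} \<times> {0..1}) (\<lambda>z. (vderiv ^^ m) h (snd z * fst z))" for m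
    by (rule continuous_on_compose2[OF smooth_on_continuous_on[OF h]])
       (auto intro!: continuous_intros mult_in_symmetric_interval)
  show "continuous_on ({-d<..<d} \<times> {0..1})
      (\<lambda>(x, s). s ^ Suc n *\<^sub>R (vderiv ^^ Suc (Suc n)) h (s * x))"
    unfolding case_prod_beta by (intro continuous_intros cont)
  fix x s :: real assume x: "x \<in> {-d<..<d}"
  show "continuous_on {0..1} (\<lambda>s. s ^ n *\<^sub>R (vderiv ^^ Suc n) h (s * x))"
    by (intro continuous_intros continuous_on_compose2[OF smooth_on_continuous_on[OF h]])
       (auto intro: mult_in_symmetric_interval x)
  assume s: "s \<in> {0..1}"
  have "(((vderiv ^^ Suc n) h \<circ> (\<lambda>x. s * x)) has_vector_derivative
      s *\<^sub>R (vderiv ^^ Suc (Suc n)) h (s * x)) (at x)"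
    by (rule vector_diff_chain_at[where f="\<lambda>x. s * x",
          OF _ smooth_on_has_vderiv[OF h mult_in_symmetric_interval[OF s x], of "Suc n"]])
       (auto intro!: derivative_eq_intros)
  from bounded_linear.has_vector_derivative[OF bounded_linear_scaleR_right[of "s ^ n"] this]
  show "((\<lambda>x. s ^ n *\<^sub>R (vderiv ^^ Suc n) h (s * x)) has_vector_derivative
      s ^ Suc n *\<^sub>R (vderiv ^^ Suc (Suc n)) h (s * x)) (at x)"
    by (simp add: o_def mult.commute del: funpow.simps)
qed

lemma increment_eq_integral:
  fixes g g' :: "real \<Rightarrow> 'b::banach"
  assumes "\<And>s. s \<in> {0..1} \<Longrightarrow> (g has_vector_derivative g' (s * t)) (at (s * t))"
  shows "g t - g 0 = integral {0..1} (\<lambda>s. t *\<^sub>R g' (s * t))"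
proof -
  have "((\<lambda>s. t *\<^sub>R g' (s * t)) has_integral g (1 * t) - g (0 * t)) {0..1}"
  proof (rule fundamental_theorem_of_calculus)
    fix s :: real assume "s \<in> {0..1}"
    have "((g \<circ> (\<lambda>s. s * t)) has_vector_derivative t *\<^sub>R g' (s * t)) (at s)"
      by (rule vector_diff_chain_at[where f="\<lambda>s. s * t", OF _ assms[OF \<open>s \<in> {0..1}\<close>]])
         (auto intro!: derivative_eq_intros)
    then show "((\<lambda>s. g (s * t)) has_vector_derivative t *\<^sub>R g' (s * t)) (at s within {0..1})"
      by (simp add: o_def has_vector_derivative_at_within)
  qed simp
  then have "((\<lambda>s. t *\<^sub>R g' (s * t)) has_integral g t - g 0) {0..1}"
    by simp
  then show ?thesis
    by (rule integral_unique[symmetric])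
qed

lemma smooth_on_dilation_integral:
  fixes h :: "real \<Rightarrow> 'b::banach"
  assumes h: "smooth_on {-d<..<d} h"
  shows "smooth_on {-d<..<d} (\<lambda>r. integral {0..1} (\<lambda>s. vderiv h (s * r)))"
proof -
  define H where "H r = integral {0..1} (\<lambda>s. s ^ 0 *\<^sub>R (vderiv ^^ Suc 0) h (s * r))" for r
  have higher: "(vderiv ^^ n) H r = integral {0..1} (\<lambda>s. s ^ n *\<^sub>R (vderiv ^^ Suc n) h (s * r))"
    if "r \<in> {-d<..<d}" for n r
    using that
  proof (induction n arbitrary: r)
    case (Suc n)
    have "(vderiv ^^ Suc n) H r =
        vderiv (\<lambda>r. integral {0..1} (\<lambda>s. s ^ n *\<^sub>R (vderiv ^^ Suc n) h (s * r))) r"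
      using Suc by (auto intro: vderiv_cong_open[of "{-d<..<d}"])
    also have "\<dots> = integral {0..1} (\<lambda>s. s ^ Suc n *\<^sub>R (vderiv ^^ Suc (Suc n)) h (s * r))"
      by (rule vderiv_eqI[OF has_vector_derivative_dilation_integral[OF h Suc.prems]])
    finally show ?case .
  qed (simp add: H_def)
  have "smooth_on {-d<..<d} H"
    unfolding smooth_on_def
  proof (intro allI ballI)
    fix n r assume r: "r \<in> {-d<..<d}"
    have "((vderiv ^^ n) H has_vector_derivative
        integral {0..1} (\<lambda>s. s ^ Suc n *\<^sub>R (vderiv ^^ Suc (Suc n)) h (s * r))) (at r)"
      by (rule has_vector_derivative_transform_within_open[OF
            has_vector_derivative_dilation_integral[OF h r], of "{-d<..<d}"])
         (use r higher in auto)
    then show "(vderiv ^^ n) H differentiable (at r)"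
      by (rule differentiableI_vector)
  qed
  then show ?thesis
    by (simp add: H_def[abs_def])
qed

text \<open>Hadamard's lemma: \<open>h t / t = \<integral>\<^sub>0\<^sup>1 h'(s t) ds\<close>.\<close>
lemma smooth_odd_divide:
  fixes h :: "real \<Rightarrow> 'b::banach"
  assumes h: "smooth_on {-d<..<d} h" and odd: "\<forall>t\<in>{-d<..<d}. h (- t) = - h t"
  shows "\<exists>H. smooth_on {-d<..<d} H \<and> (\<forall>t\<in>{-d<..<d}. H (- t) = H t) \<and>
    (\<forall>t\<in>{-d<..<d}. t \<noteq> 0 \<longrightarrow> H t = (1 / t) *\<^sub>R h t)"
proof -
  define H where "H r = integral {0..1} (\<lambda>s. vderiv h (s * r))" for r
  have divide: "H t = (1 / t) *\<^sub>R h t" if t: "t \<in> {-d<..<d}" "t \<noteq> 0" for t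
  proof -
    have "0 \<in> {-d<..<d}"
      using t by auto
    with odd have "h 0 = - h 0"
      by force
    then have "h 0 = 0"
      by (simp add: eq_neg_iff_add_eq_0 scaleR_2[symmetric])
    have "h t - h 0 = integral {0..1} (\<lambda>s. t *\<^sub>R vderiv h (s * t))"
      by (intro increment_eq_integral has_vderiv smooth_on_differentiable[OF h]
          mult_in_symmetric_interval t)
    then have "t *\<^sub>R H t = h t"
      using \<open>h 0 = 0\<close> by (simp add: H_def)
    then have "(1 / t) *\<^sub>R (t *\<^sub>R H t) = (1 / t) *\<^sub>R h t"
      by simp
    then show ?thesis
      using t by simp
  qed
  have "H (- t) = H t" if "t \<in> {-d<..<d}" for t
    using that divide[of t] divide[of "- t"] odd by (cases "t = 0") auto
  with smooth_on_dilation_integral[OF h] divide show ?thesis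
    unfolding H_def by blast
qed

section \<open>Directional derivatives\<close>

lemma has_vector_derivative_shift_iff:
  "((\<lambda>t. f (r + t)) has_vector_derivative D) (at 0) \<longleftrightarrow> (f has_vector_derivative D) (at r)"
proof
  assume a: "((\<lambda>t. f (r + t)) has_vector_derivative D) (at 0)"
  have "(((\<lambda>t. f (r + t)) \<circ> (\<lambda>s. s - r)) has_vector_derivative 1 *\<^sub>R D) (at r)"
    by (rule vector_diff_chain_at) (auto intro!: derivative_eq_intros simp: a)
  then show "(f has_vector_derivative D) (at r)"
    by (simp add: o_def)
next
  assume a: "(f has_vector_derivative D) (at r)"
  have "((f \<circ> (\<lambda>t. r + t)) has_vector_derivative 1 *\<^sub>R D) (at 0)"
    by (rule vector_diff_chain_at) (auto intro!: derivative_eq_intros simp: a)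
  then show "((\<lambda>t. f (r + t)) has_vector_derivative D) (at 0)"
    by (simp add: o_def)
qed

lemma has_pd:
  "(\<lambda>t. F (x + t *\<^sub>R u)) differentiable (at 0) \<Longrightarrow>
    ((\<lambda>t. F (x + t *\<^sub>R u)) has_vector_derivative pd F u x) (at 0)"
  unfolding pd_def by (simp add: vector_derivative_works[symmetric])

lemma pd_eqI: "((\<lambda>t. F (x + t *\<^sub>R u)) has_vector_derivative D) (at 0) \<Longrightarrow> pd F u x = D"
  unfolding pd_def by (rule vector_derivative_at)

lemma differentiable_iff_has_vector_derivative:
  "f differentiable F \<longleftrightarrow> (\<exists>D. (f has_vector_derivative D) F)"
  using differentiableI_vector vector_derivative_works by blast

lemma dr_eq_vderiv: "dr F (y, r) = vderiv (\<lambda>t. F (y, t)) r"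
proof -
  have "(\<lambda>t. F ((y, r) + t *\<^sub>R (0, 1))) = (\<lambda>t. F (y, r + t))"
    by simp
  then show ?thesis
    unfolding dr_def pd_def vderiv_def vector_derivative_def
    using has_vector_derivative_shift_iff[of "\<lambda>t. F (y, t)" r] by simp
qed

lemma differentiable_dr_iff:
  fixes F :: "'a::real_normed_vector \<times> real \<Rightarrow> 'b::real_normed_vector"
  shows "(\<lambda>t. F ((y, r) + t *\<^sub>R (0, 1))) differentiable (at 0) \<longleftrightarrow>
    (\<lambda>t. F (y, t)) differentiable (at r)"
proof -
  have "(\<lambda>t. F ((y, r) + t *\<^sub>R (0, 1))) = (\<lambda>t. F (y, r + t))"
    by simp
  then show ?thesis
    unfolding differentiable_iff_has_vector_derivative
    using has_vector_derivative_shift_iff[of "\<lambda>t. F (y, t)" r] by simp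
qed

lemma pd_sum_bounded_linear:
  assumes "\<And>i. i \<in> I \<Longrightarrow> bounded_linear (L i)"
    and "\<And>i. i \<in> I \<Longrightarrow> (\<lambda>t. H i (x + t *\<^sub>R u)) differentiable (at 0)"
  shows "pd (\<lambda>z. \<Sum>i\<in>I. L i (H i z)) u x = (\<Sum>i\<in>I. L i (pd (H i) u x))"
proof (intro pd_eqI has_vector_derivative_sum)
  fix i assume "i \<in> I"
  show "((\<lambda>t. L i (H i (x + t *\<^sub>R u))) has_vector_derivative L i (pd (H i) u x)) (at 0)"
    by (rule bounded_linear.has_vector_derivative[OF assms(1) has_pd[OF assms(2)]]) fact+
qed

lemma iter_pd_append: "iter_pd (us @ [u]) F = iter_pd us (pd F u)"
  by (induction us) auto

lemma Cinf_on_C1_on: "Cinf_on U S F \<Longrightarrow> C1_on U S F"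
  unfolding Cinf_on_def by (metis empty_subsetI iter_pd.simps(1) list.set(1))

lemma Cinf_on_pd: "Cinf_on U S F \<Longrightarrow> u \<in> U \<Longrightarrow> Cinf_on U S (pd F u)"
  unfolding Cinf_on_def by (metis iter_pd_append Un_subset_iff empty_set empty_subsetI
      insert_subset list.simps(15) set_append)

lemma Cinf_on_subset: "Cinf_on U S F \<Longrightarrow> T \<subseteq> S \<Longrightarrow> Cinf_on U T F"
  unfolding Cinf_on_def C1_on_def by (meson continuous_on_subset subsetD)

fun Ck_on :: "nat \<Rightarrow> ('a::real_normed_vector \<times> real) set \<Rightarrow> ('a \<times> real) set \<Rightarrow>
    ('a \<times> real \<Rightarrow> 'b::real_normed_vector) \<Rightarrow> bool"
  where
    "Ck_on 0 U S F \<longleftrightarrow> continuous_on S F"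
  | "Ck_on (Suc n) U S F \<longleftrightarrow> continuous_on S F \<and>
      (\<forall>u\<in>U. (\<forall>x\<in>S. (\<lambda>t. F (x + t *\<^sub>R u)) differentiable (at 0)) \<and> Ck_on n U S (pd F u))"

lemma Ck_on_differentiable:
  "Ck_on (Suc n) U S F \<Longrightarrow> u \<in> U \<Longrightarrow> x \<in> S \<Longrightarrow> (\<lambda>t. F (x + t *\<^sub>R u)) differentiable (at 0)"
  by simp

lemma Ck_on_SucD: "Ck_on (Suc n) U S F \<Longrightarrow> Ck_on n U S F"
  by (induction n arbitrary: F) auto

lemma Cinf_on_imp_Ck_on: "Cinf_on U S F \<Longrightarrow> Ck_on n U S F"
proof (induction n arbitrary: F)
  case 0
  then show ?case
    using Cinf_on_C1_on C1_on_def by fastforce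
next
  case (Suc n)
  then show ?case
    using Cinf_on_C1_on[OF Suc.prems] Cinf_on_pd[OF Suc.prems] by (simp add: C1_on_def)
qed

lemma has_real_derivative_inverse_power_line:
  assumes "linear \<phi>" and "0 < \<phi> x"
  shows "((\<lambda>t. (1 / \<phi> (x + t *\<^sub>R u)) ^ j) has_real_derivative
      - (real j * \<phi> u * (1 / \<phi> x) ^ Suc j)) (at 0)"
proof -
  have line: "\<phi> (x + t *\<^sub>R u) = \<phi> x + t * \<phi> u" for t
    using assms(1) by (simp add: linear_add linear_scale)
  have "((\<lambda>t. 1 / (\<phi> x + t * \<phi> u)) has_real_derivative - \<phi> u / \<phi> x ^ 2) (at 0)"
    using assms(2) by (auto intro!: derivative_eq_intros simp: power2_eq_square)
  from DERIV_power[OF this, of j]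
  show ?thesis
    using assms(2) by (cases j) (simp_all add: line field_simps power2_eq_square)
qed

lemma has_vector_derivative_inverse_power_scaleR:
  assumes "linear \<phi>" and "0 < \<phi> x" and "(\<lambda>t. G (x + t *\<^sub>R u)) differentiable (at 0)"
  shows "((\<lambda>t. (1 / \<phi> (x + t *\<^sub>R u)) ^ j *\<^sub>R G (x + t *\<^sub>R u)) has_vector_derivative
      (1 / \<phi> x) ^ j *\<^sub>R pd G u x + (1 / \<phi> x) ^ Suc j *\<^sub>R (- (real j * \<phi> u)) *\<^sub>R G x) (at 0)"
  using has_vector_derivative_scaleR[OF
      has_real_derivative_inverse_power_line[OF assms(1,2), where j=j] has_pd[OF assms(3)]]
  by (simp add: algebra_simps)

locale relopen_domain =
  fixes W U S :: "('a::real_normed_vector \<times> real) set"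
  assumes subspace_W: "subspace W" and directions: "U \<subseteq> W"
    and openin_S: "openin (top_of_set W) S"
begin

lemma S_subset_W: "S \<subseteq> W"
  using openin_S openin_imp_subset by blast

lemma open_line_preimage:
  assumes "x \<in> W" "u \<in> W"
  shows "open {t. x + t *\<^sub>R u \<in> S}"
proof -
  obtain T where T: "open T" "S = W \<inter> T"
    using openin_S by (auto simp: openin_open)
  have "x + t *\<^sub>R u \<in> W" for t
    using assms subspace_W by (simp add: subspace_add subspace_scale)
  then have "{t. x + t *\<^sub>R u \<in> S} = (\<lambda>t. x + t *\<^sub>R u) -` T"
    using T(2) by auto
  also have "open \<dots>"
    by (rule open_vimage[OF T(1)]) (intro continuous_intros)
  finally show ?thesis .
qed

lemma eventually_line_in_domain:
  assumes "x \<in> S" "u \<in> W"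
  shows "\<forall>\<^sub>F t in nhds 0. x + t *\<^sub>R u \<in> S"
  unfolding eventually_nhds
proof (intro exI conjI)
  show "open {t. x + t *\<^sub>R u \<in> S}"
    using assms S_subset_W by (intro open_line_preimage) auto
qed (use assms in auto)

lemma square_in_domain:
  assumes x: "x \<in> S" and "u \<in> W" "w \<in> W"
  shows "\<exists>e>0. \<forall>s t. \<bar>s\<bar> < e \<longrightarrow> \<bar>t\<bar> < e \<longrightarrow> x + s *\<^sub>R u + t *\<^sub>R w \<in> S"
proof -
  obtain T where T: "open T" "S = W \<inter> T"
    using openin_S by (auto simp: openin_open)
  define P where "P = (\<lambda>z. x + fst z *\<^sub>R u + snd z *\<^sub>R w) -` T"
  have "open P"
    unfolding P_def by (rule open_vimage[OF T(1)]) (intro continuous_intros)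
  moreover have "(0, 0) \<in> P"
    using x T(2) by (simp add: P_def)
  ultimately obtain e where e: "e > 0" "ball (0, 0) e \<subseteq> P"
    using open_contains_ball_eq by blast
  have "x + s *\<^sub>R u + t *\<^sub>R w \<in> S" if "\<bar>s\<bar> < e / sqrt 2" "\<bar>t\<bar> < e / sqrt 2" for s t
  proof -
    have "(s, t) \<in> ball (0, 0) e"
      using real_sqrt_sum_squares_less[OF that] by (simp add: dist_Pair_Pair dist_real_def)
    then have "x + s *\<^sub>R u + t *\<^sub>R w \<in> T"
      using e(2) by (auto simp: P_def)
    moreover have "x + s *\<^sub>R u + t *\<^sub>R w \<in> W"
      using x assms S_subset_W subspace_W by (auto simp: subspace_add subspace_scale)
    ultimately show ?thesis
      using T(2) by blast
  qed
  then show ?thesis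
    using e(1) by (intro exI[of _ "e / sqrt 2"]) auto
qed

lemma radial_interval_in_domain:
  assumes "(y, 0) \<in> S" and "(0, 1) \<in> W"
  obtains d where "0 < d" and "\<And>t. t \<in> {-d<..<d} \<Longrightarrow> (y, t) \<in> S"
proof -
  obtain d where "0 < d" "\<forall>t. dist t 0 < d \<longrightarrow> (y, 0) + t *\<^sub>R (0, 1) \<in> S"
    using eventually_line_in_domain[OF assms] unfolding eventually_nhds_metric by blast
  then show ?thesis
    by (intro that[of d]) (auto simp: dist_real_def)
qed

lemma eventually_eq_on_line:
  assumes "x \<in> S" "u \<in> W" "\<And>z. z \<in> S \<Longrightarrow> F z = G z"
  shows "\<forall>\<^sub>F t in nhds 0. F (x + t *\<^sub>R u) = G (x + t *\<^sub>R u)"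
  using eventually_line_in_domain[OF assms(1,2)] by (rule eventually_mono) (rule assms(3))

lemma pd_cong:
  assumes "x \<in> S" "u \<in> W" "\<And>z. z \<in> S \<Longrightarrow> F z = G z"
  shows "pd F u x = pd G u x"
  unfolding pd_def
proof (rule vector_derivative_cong_eq)
  show "\<forall>\<^sub>F t in nhds 0. t \<in> UNIV \<longrightarrow> F (x + t *\<^sub>R u) = G (x + t *\<^sub>R u)"
    using eventually_eq_on_line[OF assms] by simp
qed (use assms in auto)

lemma differentiable_line_cong:
  assumes "x \<in> S" "u \<in> W" "\<And>z. z \<in> S \<Longrightarrow> F z = G z"
    and "(\<lambda>t. F (x + t *\<^sub>R u)) differentiable (at 0)"
  shows "(\<lambda>t. G (x + t *\<^sub>R u)) differentiable (at 0)"
proof -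
  have "((\<lambda>t. G (x + t *\<^sub>R u)) has_vector_derivative pd F u x) (at 0)"
  proof (rule has_vector_derivative_transform_within_open[OF has_pd[OF assms(4)]])
    show "open {t. x + t *\<^sub>R u \<in> S}"
      using assms(1,2) S_subset_W by (intro open_line_preimage) auto
  qed (use assms in auto)
  then show ?thesis
    by (rule differentiableI_vector)
qed

lemma Ck_on_cong:
  assumes "\<And>z. z \<in> S \<Longrightarrow> F z = G z" and "Ck_on n U S F"
  shows "Ck_on n U S G"
  using assms
proof (induction n arbitrary: F G)
  case 0
  then show ?case
    by (auto intro: continuous_on_eq)
next
  case (Suc n)
  have "continuous_on S G"
    using Suc.prems by (auto intro: continuous_on_eq)
  moreover have "(\<lambda>t. G (x + t *\<^sub>R u)) differentiable (at 0)" if "u \<in> U" "x \<in> S" for u x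
    by (rule differentiable_line_cong[of x u F]) (use that directions Suc.prems in auto)
  moreover have "Ck_on n U S (pd G u)" if "u \<in> U" for u
  proof (rule Suc.IH)
    show "pd F u z = pd G u z" if "z \<in> S" for z
      by (rule pd_cong) (use \<open>u \<in> U\<close> that directions Suc.prems(1) in auto)
  qed (use Suc.prems that in simp)
  ultimately show ?case
    by simp
qed

lemma Ck_on_add:
  assumes "Ck_on n U S F" "Ck_on n U S G"
  shows "Ck_on n U S (\<lambda>z. F z + G z)"
  using assms
proof (induction n arbitrary: F G)
  case 0
  then show ?case
    by (simp add: continuous_on_add)
next
  case (Suc n)
  have "Ck_on n U S (pd (\<lambda>z. F z + G z) u)" if "u \<in> U" for u
  proof (rule Ck_on_cong)
    show "Ck_on n U S (\<lambda>z. pd F u z + pd G u z)"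
      by (rule Suc.IH) (use Suc.prems that in simp_all)
    show "pd F u z + pd G u z = pd (\<lambda>z. F z + G z) u z" if "z \<in> S" for z
      by (rule pd_eqI[symmetric], rule has_vector_derivative_add; rule has_pd)
         (use Suc.prems \<open>u \<in> U\<close> that in simp_all)
  qed
  with Suc.prems show ?case
    by (simp add: continuous_on_add)
qed

lemma Ck_on_bounded_linear:
  fixes F :: "'a \<times> real \<Rightarrow> 'b::real_normed_vector"
  assumes L: "bounded_linear L" and "Ck_on n U S F"
  shows "Ck_on n U S (\<lambda>z. L (F z))"
proof -
  have cont: "continuous_on S (\<lambda>z. L (F z))" if "continuous_on S F" for F :: "'a \<times> real \<Rightarrow> 'b"
    using linear_continuous_on[OF L] that by (rule continuous_on_compose2) auto
  show ?thesis
    using assms(2)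
  proof (induction n arbitrary: F)
    case 0
    then show ?case
      by (simp add: cont)
  next
    case (Suc n)
    have deriv: "((\<lambda>t. L (F (x + t *\<^sub>R u))) has_vector_derivative L (pd F u x)) (at 0)"
      if "u \<in> U" "x \<in> S" for u x
      by (rule bounded_linear.has_vector_derivative[OF L has_pd]) (use Suc.prems that in simp)
    have pd_part: "Ck_on n U S (pd (\<lambda>z. L (F z)) u)" if "u \<in> U" for u
    proof (rule Ck_on_cong)
      show "Ck_on n U S (\<lambda>z. L (pd F u z))"
        by (rule Suc.IH) (use Suc.prems that in simp)
      show "L (pd F u z) = pd (\<lambda>z. L (F z)) u z" if "z \<in> S" for z
        by (rule pd_eqI[symmetric, OF deriv[OF \<open>u \<in> U\<close> that]])
    qed
    have "(\<lambda>t. L (F (x + t *\<^sub>R u))) differentiable (at 0)" if "u \<in> U" "x \<in> S" for u x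
      using deriv[OF that] by (rule differentiableI_vector)
    with Suc.prems pd_part show ?case
      by (simp add: cont)
  qed
qed

lemma Ck_on_inverse_power_scaleR:
  fixes G :: "'a \<times> real \<Rightarrow> 'b::real_normed_vector"
  assumes \<phi>: "bounded_linear \<phi>" and pos: "\<forall>x\<in>S. 0 < \<phi> x" and "Ck_on n U S G"
  shows "Ck_on n U S (\<lambda>x. (1 / \<phi> x) ^ j *\<^sub>R G x)"
proof -
  have cont: "continuous_on S (\<lambda>x. (1 / \<phi> x) ^ j *\<^sub>R G x)"
    if "continuous_on S G" for j and G :: "'a \<times> real \<Rightarrow> 'b"
    using linear_continuous_on[OF \<phi>] pos that by (auto intro!: continuous_intros)
  show ?thesis
    using assms(3)
  proof (induction n arbitrary: j G)
    case 0
    then show ?case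
      by (simp add: cont)
  next
    case (Suc n)
    have lin: "linear \<phi>"
      using \<phi> bounded_linear.linear by blast
    have deriv: "((\<lambda>t. (1 / \<phi> (x + t *\<^sub>R u)) ^ j *\<^sub>R G (x + t *\<^sub>R u)) has_vector_derivative
        (1 / \<phi> x) ^ j *\<^sub>R pd G u x + (1 / \<phi> x) ^ Suc j *\<^sub>R (- (real j * \<phi> u)) *\<^sub>R G x) (at 0)"
      if "u \<in> U" "x \<in> S" for u x
      by (rule has_vector_derivative_inverse_power_scaleR[OF lin]) (use Suc.prems that pos in simp_all)
    have pd_part: "Ck_on n U S (pd (\<lambda>x. (1 / \<phi> x) ^ j *\<^sub>R G x) u)" if "u \<in> U" for u
    proof (rule Ck_on_cong)
      have "Ck_on n U S (\<lambda>x. (- (real j * \<phi> u)) *\<^sub>R G x)"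
        by (rule Ck_on_bounded_linear[OF bounded_linear_scaleR_right Ck_on_SucD[OF Suc.prems]])
      then have "Ck_on n U S (\<lambda>x. (1 / \<phi> x) ^ Suc j *\<^sub>R (- (real j * \<phi> u)) *\<^sub>R G x)"
        by (rule Suc.IH)
      moreover have "Ck_on n U S (\<lambda>x. (1 / \<phi> x) ^ j *\<^sub>R pd G u x)"
        by (rule Suc.IH) (use Suc.prems that in simp)
      ultimately show "Ck_on n U S (\<lambda>x. (1 / \<phi> x) ^ j *\<^sub>R pd G u x +
          (1 / \<phi> x) ^ Suc j *\<^sub>R (- (real j * \<phi> u)) *\<^sub>R G x)"
        by (rule Ck_on_add[rotated])
      show "(1 / \<phi> x) ^ j *\<^sub>R pd G u x + (1 / \<phi> x) ^ Suc j *\<^sub>R (- (real j * \<phi> u)) *\<^sub>R G x =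
          pd (\<lambda>x. (1 / \<phi> x) ^ j *\<^sub>R G x) u x" if "x \<in> S" for x
        by (rule pd_eqI[symmetric, OF deriv[OF \<open>u \<in> U\<close> that]])
    qed
    have "(\<lambda>t. (1 / \<phi> (x + t *\<^sub>R u)) ^ j *\<^sub>R G (x + t *\<^sub>R u)) differentiable (at 0)"
      if "u \<in> U" "x \<in> S" for u x
      using deriv[OF that] by (rule differentiableI_vector)
    with Suc.prems pd_part show ?case
      by (simp add: cont)
  qed
qed

end

section \<open>Symmetry of mixed directional derivatives\<close>

lemma has_vector_derivative_line_shift:
  fixes G :: "'x::real_normed_vector \<Rightarrow> 'b::real_normed_vector"
  assumes "((\<lambda>t. G (y + \<sigma> *\<^sub>R u + t *\<^sub>R u)) has_vector_derivative D) (at 0)"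
  shows "((\<lambda>\<sigma>. G (y + \<sigma> *\<^sub>R u)) has_vector_derivative D) (at \<sigma>)"
proof (rule iffD1[OF has_vector_derivative_shift_iff[of "\<lambda>\<sigma>. G (y + \<sigma> *\<^sub>R u)" \<sigma>]])
  have "(\<lambda>t. G (y + (\<sigma> + t) *\<^sub>R u)) = (\<lambda>t. G (y + \<sigma> *\<^sub>R u + t *\<^sub>R u))"
    by (simp add: scaleR_add_left add.assoc)
  with assms show "((\<lambda>t. G (y + (\<sigma> + t) *\<^sub>R u)) has_vector_derivative D) (at 0)"
    by simp
qed

lemma line_increment_eq_integral:
  fixes G P :: "'x::real_normed_vector \<Rightarrow> 'b::banach"
  assumes "\<And>s. s \<in> {0..1} \<Longrightarrow>
    ((\<lambda>t. G (y + (s * \<sigma>) *\<^sub>R u + t *\<^sub>R u)) has_vector_derivative P (y + (s * \<sigma>) *\<^sub>R u)) (at 0)"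
  shows "G (y + \<sigma> *\<^sub>R u) - G y = integral {0..1} (\<lambda>s. \<sigma> *\<^sub>R P (y + (s * \<sigma>) *\<^sub>R u))"
  using increment_eq_integral[of "\<lambda>\<sigma>. G (y + \<sigma> *\<^sub>R u)" "\<lambda>\<sigma>. P (y + \<sigma> *\<^sub>R u)" \<sigma>]
    has_vector_derivative_line_shift[OF assms]
  by simp

lemma has_vector_derivative_difference_quotient:
  fixes f J :: "real \<Rightarrow> 'b::real_normed_vector"
  assumes ev: "\<forall>\<^sub>F h in at 0. f h - f 0 = h *\<^sub>R J h" and lim: "(J \<longlongrightarrow> L) (at 0)"
  shows "(f has_vector_derivative L) (at 0)"
proof -
  have "((\<lambda>h. norm (J h - L)) \<longlongrightarrow> 0) (at 0)"
    using tendsto_diff[OF lim tendsto_const[of L]] by (simp add: tendsto_norm_zero)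
  moreover have "\<forall>\<^sub>F h in at 0. norm (J h - L) = norm (f (0 + h) - f 0 - h *\<^sub>R L) / norm h"
    using ev eventually_neq_at_within[of 0 0 UNIV]
  proof eventually_elim
    case (elim h)
    then have "f (0 + h) - f 0 - h *\<^sub>R L = h *\<^sub>R (J h - L)"
      by (simp add: algebra_simps)
    with elim show ?case
      by simp
  qed
  ultimately have "((\<lambda>h. norm (f (0 + h) - f 0 - h *\<^sub>R L) / norm h) \<longlongrightarrow> 0) (at 0)"
    by (rule Lim_transform_eventually)
  then show ?thesis
    unfolding has_vector_derivative_def has_derivative_at
    by (auto intro: bounded_linear_scaleR_left)
qed

text \<open>Schwarz's theorem for directional derivatives: with \<open>P = \<partial>\<^sub>u G\<close>, \<open>Q = \<partial>\<^sub>w G\<close> and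
  \<open>M = \<partial>\<^sub>w P\<close>, the difference quotient of \<open>Q\<close> along \<open>u\<close> is an average of \<open>M\<close> over a
  shrinking segment, so \<open>\<partial>\<^sub>u Q = M\<close>.\<close>
locale mixed_partials =
  fixes S :: "'x::real_normed_vector set" and G P Q M :: "'x \<Rightarrow> 'b::banach"
    and x u w :: 'x and e :: real
  assumes e: "0 < e"
    and square: "\<And>s t. \<bar>s\<bar> < e \<Longrightarrow> \<bar>t\<bar> < e \<Longrightarrow> x + t *\<^sub>R w + s *\<^sub>R u \<in> S"
    and P: "\<And>y. y \<in> S \<Longrightarrow> ((\<lambda>s. G (y + s *\<^sub>R u)) has_vector_derivative P y) (at 0)"
    and Q: "\<And>y. y \<in> S \<Longrightarrow> ((\<lambda>t. G (y + t *\<^sub>R w)) has_vector_derivative Q y) (at 0)"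
    and M: "\<And>y. y \<in> S \<Longrightarrow> ((\<lambda>t. P (y + t *\<^sub>R w)) has_vector_derivative M y) (at 0)"
    and cont_P: "continuous_on S P" and cont_M: "continuous_on S M"
begin

definition z :: "real \<Rightarrow> real \<Rightarrow> 'x" where
  "z s t = x + t *\<^sub>R w + s *\<^sub>R u"

lemma z_in_S: "s \<in> {-e<..<e} \<Longrightarrow> t \<in> {-e<..<e} \<Longrightarrow> z s t \<in> S"
  using square by (auto simp: z_def)

lemma z_dilate_in_S:
  "\<tau> \<in> {0..1} \<Longrightarrow> s \<in> {-e<..<e} \<Longrightarrow> t \<in> {-e<..<e} \<Longrightarrow> z (\<tau> * s) t \<in> S"
  using z_in_S mult_in_symmetric_interval by blast

lemma G_increment_eq_integral:
  assumes s: "s \<in> {-e<..<e}" and t: "t \<in> {-e<..<e}"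
  shows "G (z s t) - G (z 0 t) = integral {0..1} (\<lambda>\<tau>. s *\<^sub>R P (z (\<tau> * s) t))"
proof -
  have "((\<lambda>r. G (x + t *\<^sub>R w + (\<tau> * s) *\<^sub>R u + r *\<^sub>R u)) has_vector_derivative
      P (x + t *\<^sub>R w + (\<tau> * s) *\<^sub>R u)) (at 0)" if "\<tau> \<in> {0..1}" for \<tau>
    using P[OF z_dilate_in_S[OF that s t]] by (simp add: z_def)
  from line_increment_eq_integral[OF this]
  show ?thesis
    by (simp add: z_def)
qed

lemma has_vector_derivative_P_along_w:
  assumes "\<tau> \<in> {0..1}" "s \<in> {-e<..<e}" "t \<in> {-e<..<e}"
  shows "((\<lambda>t. P (z (\<tau> * s) t)) has_vector_derivative M (z (\<tau> * s) t)) (at t)"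
proof -
  have "(\<lambda>r. P (z (\<tau> * s) t + r *\<^sub>R w)) = (\<lambda>r. P (x + (\<tau> * s) *\<^sub>R u + t *\<^sub>R w + r *\<^sub>R w))"
    by (rule ext) (simp add: z_def add_ac)
  then have "((\<lambda>r. P (x + (\<tau> * s) *\<^sub>R u + t *\<^sub>R w + r *\<^sub>R w)) has_vector_derivative
      M (z (\<tau> * s) t)) (at 0)"
    using M[OF z_dilate_in_S[OF assms]] by simp
  from has_vector_derivative_line_shift[OF this]
  show ?thesis
    unfolding z_def by (simp add: add_ac)
qed

lemma has_vector_derivative_G_along_w:
  assumes "s \<in> {-e<..<e}"
  shows "((\<lambda>t. G (z s t)) has_vector_derivative Q (z s 0)) (at 0)"
proof -
  have "(\<lambda>t. G (z s 0 + t *\<^sub>R w)) = (\<lambda>t. G (z s t))"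
    by (rule ext) (simp add: z_def add_ac)
  then show ?thesis
    using Q[OF z_in_S[OF assms, of 0]] e by simp
qed

lemma Q_increment_eq_integral:
  assumes s: "s \<in> {-e<..<e}"
  shows "Q (z s 0) - Q (z 0 0) = s *\<^sub>R integral {0..1} (\<lambda>\<tau>. M (z (\<tau> * s) 0))"
proof -
  have "((\<lambda>t. integral {0..1} (\<lambda>\<tau>. s *\<^sub>R P (z (\<tau> * s) t))) has_vector_derivative
      integral {0..1} (\<lambda>\<tau>. s *\<^sub>R M (z (\<tau> * s) 0))) (at 0)"
  proof (rule has_vector_derivative_integral_param)
    fix t \<tau> :: real assume "t \<in> {-e<..<e}" "\<tau> \<in> {0..1}"
    with s show "((\<lambda>t. s *\<^sub>R P (z (\<tau> * s) t)) has_vector_derivative s *\<^sub>R M (z (\<tau> * s) t)) (at t)"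
      by (intro bounded_linear.has_vector_derivative[OF bounded_linear_scaleR_right]
          has_vector_derivative_P_along_w)
  next
    fix t assume "t \<in> {-e<..<e}"
    then show "continuous_on {0..1} (\<lambda>\<tau>. s *\<^sub>R P (z (\<tau> * s) t))"
      using s z_dilate_in_S
      by (intro continuous_intros continuous_on_compose2[OF cont_P])
         (auto simp: z_def intro!: continuous_intros)
  next
    show "continuous_on ({-e<..<e} \<times> {0..1}) (\<lambda>(t, \<tau>). s *\<^sub>R M (z (\<tau> * s) t))"
      unfolding case_prod_beta using s z_dilate_in_S
      by (intro continuous_intros continuous_on_compose2[OF cont_M])
         (auto simp: z_def intro!: continuous_intros)
  qed (use e in simp)
  then have "((\<lambda>t. G (z s t) - G (z 0 t)) has_vector_derivative
      integral {0..1} (\<lambda>\<tau>. s *\<^sub>R M (z (\<tau> * s) 0))) (at 0)"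
    by (rule has_vector_derivative_transform_within_open[of _ _ 0 "{-e<..<e}"])
       (use G_increment_eq_integral[OF s] e in simp_all)
  moreover have "((\<lambda>t. G (z s t) - G (z 0 t)) has_vector_derivative Q (z s 0) - Q (z 0 0)) (at 0)"
    using s e by (intro has_vector_derivative_diff has_vector_derivative_G_along_w) simp_all
  ultimately have "Q (z s 0) - Q (z 0 0) = integral {0..1} (\<lambda>\<tau>. s *\<^sub>R M (z (\<tau> * s) 0))"
    by (rule vector_derivative_unique_at[symmetric])
  then show ?thesis
    by simp
qed

theorem has_vector_derivative_Q_along_u:
  "((\<lambda>s. Q (x + s *\<^sub>R u)) has_vector_derivative M x) (at 0)"
proof (rule has_vector_derivative_difference_quotient)
  define J where "J s = integral {0..1} (\<lambda>\<tau>. M (z (\<tau> * s) 0))" for s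
  have "continuous_on ({-e<..<e} \<times> {0..1}) (\<lambda>p. M (z (snd p * fst p) 0))"
  proof (rule continuous_on_compose2[OF cont_M])
    show "(\<lambda>p. z (snd p * fst p) 0) ` ({-e<..<e} \<times> {0..1}) \<subseteq> S"
      using z_dilate_in_S e by auto
  qed (auto simp: z_def intro!: continuous_intros)
  then have "continuous_on {-e<..<e} J"
    unfolding J_def box_real(2)[symmetric]
    by (intro integral_continuous_on_param) (simp add: case_prod_beta)
  then have "isCont J 0"
    using e by (simp add: continuous_on_eq_continuous_at)
  moreover have "J 0 = M x"
    by (simp add: J_def z_def)
  ultimately show "(J \<longlongrightarrow> M x) (at 0)"
    by (metis isCont_def)
  show "\<forall>\<^sub>F s in at 0. Q (x + s *\<^sub>R u) - Q (x + 0 *\<^sub>R u) = s *\<^sub>R J s"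
    using eventually_at_in_open'[of "{-e<..<e}" 0] e Q_increment_eq_integral
    by (auto simp: z_def J_def elim: eventually_mono)
qed

end

section \<open>The recursion for \<open>A\<^sub>k\<close> and \<open>B\<^sub>k\<close> off the axis\<close>

definition xp_operator ::
  "(nat \<Rightarrow> 'b \<Rightarrow> 'c::real_normed_vector) \<Rightarrow> (nat \<Rightarrow> 'a::real_normed_vector) \<Rightarrow> nat \<Rightarrow>
    ('a \<times> real \<Rightarrow> 'b::real_normed_vector) \<Rightarrow> 'a \<times> real \<Rightarrow> 'c"
  where "xp_operator L v p F x = (\<Sum>s=0..p. L s (pd F (v s, 0) x))"

lemma Dxp_eq_xp_operator: "Dxp mul v p F = xp_operator (\<lambda>s. mul (v s)) v p F"
  by (rule ext) (simp add: Dxp_def xp_operator_def)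

lemma Dxp_bar_eq_xp_operator:
  "Dxp_bar mul v p F = xp_operator (\<lambda>s b. if s = 0 then b else - mul (v s) b) v p F"
proof (rule ext)
  fix x
  have "xp_operator (\<lambda>s b. if s = 0 then b else - mul (v s) b) v p F x =
      pd F (v 0, 0) x + (\<Sum>s=Suc 0..p. - mul (v s) (pd F (v s, 0) x))"
    unfolding xp_operator_def by (simp add: sum.atLeast_Suc_atMost)
  then show "Dxp_bar mul v p F x = xp_operator (\<lambda>s b. if s = 0 then b else - mul (v s) b) v p F x"
    by (simp add: Dxp_bar_def sum_negf)
qed

lemma xp_operator_scaleR_radial:
  assumes "\<And>s. s \<le> p \<Longrightarrow> linear (L s)"
    and "\<And>s. s \<le> p \<Longrightarrow> (\<lambda>t. G (x + t *\<^sub>R (v s, 0))) differentiable (at 0)"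
  shows "xp_operator L v p (\<lambda>z. f (snd z) *\<^sub>R G z) x = f (snd x) *\<^sub>R xp_operator L v p G x"
proof -
  have "pd (\<lambda>z. f (snd z) *\<^sub>R G z) (v s, 0) x = f (snd x) *\<^sub>R pd G (v s, 0) x" if "s \<le> p" for s
    using bounded_linear.has_vector_derivative[OF bounded_linear_scaleR_right
        has_pd[OF assms(2)[OF that]], of "f (snd x)"]
    by (intro pd_eqI) simp
  with assms(1) show ?thesis
    unfolding xp_operator_def by (simp add: scaleR_sum_right linear_scale)
qed

context relopen_domain
begin

lemma pd_pd_commute:
  fixes G :: "'a \<times> real \<Rightarrow> 'b::banach"
  assumes G: "Ck_on 2 U S G" and x: "x \<in> S" and u: "u \<in> U" and w: "w \<in> U"
  shows "pd (pd G w) u x = pd (pd G u) w x"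
proof -
  obtain e where "e > 0" "\<forall>s t. \<bar>s\<bar> < e \<longrightarrow> \<bar>t\<bar> < e \<longrightarrow> x + s *\<^sub>R w + t *\<^sub>R u \<in> S"
    using square_in_domain[OF x, of w u] u w directions by auto
  then interpret mixed_partials S G "pd G u" "pd G w" "pd (pd G u) w" x u w e
    using G u w by unfold_locales (auto simp: numeral_2_eq_2 intro: has_pd)
  show ?thesis
    by (rule pd_eqI[OF has_vector_derivative_Q_along_u])
qed

lemma xp_operator_pd_commute:
  fixes G :: "'a \<times> real \<Rightarrow> 'b::banach"
  assumes L: "\<And>s. s \<le> p \<Longrightarrow> bounded_linear (L s)" and v: "\<And>s. s \<le> p \<Longrightarrow> (v s, 0) \<in> U"
    and w: "w \<in> U" and G: "Ck_on 2 U S G" and x: "x \<in> S"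
  shows "xp_operator L v p (pd G w) x = pd (xp_operator L v p G) w x"
proof -
  have "xp_operator L v p (pd G w) x = (\<Sum>s=0..p. L s (pd (pd G (v s, 0)) w x))"
    unfolding xp_operator_def using pd_pd_commute[OF G x v w] by simp
  also have "\<dots> = pd (\<lambda>z. \<Sum>s=0..p. L s (pd G (v s, 0) z)) w x"
    using G x v w by (intro pd_sum_bounded_linear[symmetric] L) (auto simp: numeral_2_eq_2)
  finally show ?thesis
    by (simp add: xp_operator_def[abs_def])
qed

end

lemma vderiv_radial_identity:
  fixes \<beta> :: "real \<Rightarrow> 'b::real_normed_vector"
  assumes N: "open N" "r \<in> N" "\<forall>t\<in>N. 0 < t"
    and \<beta>: "\<forall>t\<in>N. \<beta> differentiable (at t)" and \<beta>': "vderiv \<beta> differentiable (at r)"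
  shows "(1 / r) *\<^sub>R vderiv (\<lambda>t. vderiv \<beta> t + (2 * real k / t) *\<^sub>R \<beta> t) r
      - vderiv (vderiv (\<lambda>t. (1 / t) *\<^sub>R \<beta> t)) r
    = (2 * real (Suc k) / r) *\<^sub>R vderiv (\<lambda>t. (1 / t) *\<^sub>R \<beta> t) r"
proof -
  have r: "0 < r"
    using N by blast
  have inv: "((\<lambda>t. c / t) has_real_derivative - (c / t\<^sup>2)) (at t)" if "0 < t" for c t :: real
    using that by (auto intro!: derivative_eq_intros simp: power2_eq_square)
  have inv2: "((\<lambda>t. - (1 / t\<^sup>2)) has_real_derivative 2 / t ^ 3) (at t)" if "0 < t" for t :: real
    using that by (auto intro!: derivative_eq_intros simp: power2_eq_square power3_eq_cube field_simps)
  have quotient: "vderiv (\<lambda>t. (1 / t) *\<^sub>R \<beta> t) t = (1 / t) *\<^sub>R vderiv \<beta> t - (1 / t\<^sup>2) *\<^sub>R \<beta> t"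
    if "t \<in> N" for t
  proof (rule vderiv_eqI)
    have "0 < t" "\<beta> differentiable (at t)"
      using N \<beta> that by auto
    from has_vector_derivative_scaleR[OF inv[where c=1, OF this(1)] has_vderiv[OF this(2)]]
    show "((\<lambda>t. (1 / t) *\<^sub>R \<beta> t) has_vector_derivative
        (1 / t) *\<^sub>R vderiv \<beta> t - (1 / t\<^sup>2) *\<^sub>R \<beta> t) (at t)"
      by simp
  qed
  have "vderiv (vderiv (\<lambda>t. (1 / t) *\<^sub>R \<beta> t)) r
      = vderiv (\<lambda>t. (1 / t) *\<^sub>R vderiv \<beta> t + (- (1 / t\<^sup>2)) *\<^sub>R \<beta> t) r"
    using quotient by (intro vderiv_cong_open[OF N(1,2)]) simp
  also have "\<dots> = ((1 / r) *\<^sub>R vderiv (vderiv \<beta>) r - (1 / r\<^sup>2) *\<^sub>R vderiv \<beta> r)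
      + ((- (1 / r\<^sup>2)) *\<^sub>R vderiv \<beta> r + (2 / r ^ 3) *\<^sub>R \<beta> r)"
    using has_vector_derivative_scaleR[OF inv[where c=1] has_vderiv[OF \<beta>']]
      has_vector_derivative_scaleR[OF inv2 has_vderiv] r N \<beta>
    by (intro vderiv_eqI has_vector_derivative_add) auto
  finally have second: "vderiv (vderiv (\<lambda>t. (1 / t) *\<^sub>R \<beta> t)) r
      = (1 / r) *\<^sub>R vderiv (vderiv \<beta>) r - (2 / r\<^sup>2) *\<^sub>R vderiv \<beta> r + (2 / r ^ 3) *\<^sub>R \<beta> r"
    by (simp add: algebra_simps scaleR_2[symmetric])
  have first: "vderiv (\<lambda>t. vderiv \<beta> t + (2 * real k / t) *\<^sub>R \<beta> t) r
      = vderiv (vderiv \<beta>) r + ((2 * real k / r) *\<^sub>R vderiv \<beta> r - (2 * real k / r\<^sup>2) *\<^sub>R \<beta> r)"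
    using has_vector_derivative_scaleR[OF inv[where c="2 * real k"] has_vderiv] r N \<beta>
    by (intro vderiv_eqI has_vector_derivative_add has_vderiv \<beta>') auto
  show ?thesis
    unfolding first second quotient[OF N(2)] using r
    by (simp add: algebra_simps divide_simps power2_eq_square power3_eq_cube)
       (simp add: add_divide_distrib scaleR_add_left add_ac)
qed

locale radial_domain = relopen_domain +
  assumes radial_direction: "(0, 1) \<in> U" and positive: "\<forall>x\<in>S. 0 < snd x"
begin

lemma dr_cong: "x \<in> S \<Longrightarrow> (\<And>z. z \<in> S \<Longrightarrow> F z = G z) \<Longrightarrow> dr F x = dr G x"
  unfolding dr_def using radial_direction directions by (intro pd_cong) auto

lemma Ck_on_dr: "Ck_on (Suc n) U S F \<Longrightarrow> Ck_on n U S (dr F)"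
  unfolding dr_def using radial_direction by simp

lemma Ck_on_divide_radius: "Ck_on n U S F \<Longrightarrow> Ck_on n U S (\<lambda>x. (1 / snd x) *\<^sub>R F x)"
  using Ck_on_inverse_power_scaleR[OF bounded_linear_snd positive, where j=1] by simp

lemma Ck_on_Ak_seq: "(\<And>n. Ck_on n U S F) \<Longrightarrow> Ck_on n U S (Ak_seq F k)"
proof (induction k arbitrary: n)
  case (Suc k)
  show ?case
    using Ck_on_divide_radius[OF Ck_on_dr[OF Suc.IH[OF Suc.prems]]] by simp
qed simp

lemma Ck_on_Bk_seq: "(\<And>n. Ck_on n U S F) \<Longrightarrow> Ck_on n U S (Bk_seq F k)"
proof (induction k arbitrary: n)
  case (Suc k)
  show ?case
    using Ck_on_dr[OF Ck_on_divide_radius[OF Suc.IH[OF Suc.prems]]] by simp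
qed simp

lemma differentiable_radial_line:
  assumes "Ck_on (Suc n) U S F" "(y, t) \<in> S"
  shows "(\<lambda>t. F (y, t)) differentiable (at t)"
  using Ck_on_differentiable[OF assms(1) radial_direction assms(2)] differentiable_dr_iff by blast

lemma open_radial_line:
  assumes "(y, r) \<in> S"
  shows "open {t. (y, t) \<in> S}"
proof -
  have W: "(y, r) \<in> W" "(0, 1) \<in> W"
    using assms S_subset_W radial_direction directions by auto
  have "(y, r) - r *\<^sub>R (0, 1) \<in> W"
    by (rule subspace_diff[OF subspace_W W(1) subspace_scale[OF subspace_W W(2)]])
  from open_line_preimage[OF this W(2)]
  show ?thesis
    by simp
qed

end

locale stem_domain = radial_domain W U S for W U S :: "('a::euclidean_space \<times> real) set" +
  fixes mul :: "'a \<Rightarrow> 'a \<Rightarrow> 'a" and v :: "nat \<Rightarrow> 'a" and p :: nat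
  assumes bilinear_mul: "bilinear mul" and slice_directions: "\<And>s. s \<le> p \<Longrightarrow> (v s, 0) \<in> U"
begin

lemma bounded_linear_mul: "bounded_linear (mul a)"
  using bilinear_mul by (simp add: bilinear_def linear_conv_bounded_linear)

lemma bounded_linear_Dxp_bar_coefficient:
  "bounded_linear (\<lambda>b. if s = 0 then b else - mul (v s) b)"
  by (cases "s = 0") (simp_all add: bounded_linear_ident bounded_linear_minus bounded_linear_mul)

lemma Dxp_step:
  assumes A: "\<And>n. Ck_on n U S A" and B: "\<And>n. Ck_on n U S B"
    and identity: "\<And>z. z \<in> S \<Longrightarrow> Dxp mul v p A z - dr B z = (2 * real k / snd z) *\<^sub>R B z"
    and x: "x \<in> S"
  shows "Dxp mul v p (\<lambda>z. (1 / snd z) *\<^sub>R dr A z) x - dr (dr (\<lambda>z. (1 / snd z) *\<^sub>R B z)) x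
    = (2 * real (Suc k) / snd x) *\<^sub>R dr (\<lambda>z. (1 / snd z) *\<^sub>R B z) x"
proof -
  obtain y r where x_eq: "x = (y, r)"
    by fastforce
  define \<beta> where "\<beta> = (\<lambda>t. B (y, t))"
  have "(\<lambda>t. dr A (x + t *\<^sub>R (v s, 0))) differentiable (at 0)" if "s \<le> p" for s
    using Ck_on_differentiable[OF Ck_on_dr[OF A] slice_directions[OF that] x] .
  from xp_operator_scaleR_radial[OF bounded_linear.linear[OF bounded_linear_mul] this, where f="\<lambda>r. 1 / r"]
  have "Dxp mul v p (\<lambda>z. (1 / snd z) *\<^sub>R dr A z) x = (1 / r) *\<^sub>R Dxp mul v p (dr A) x"
    by (simp add: Dxp_eq_xp_operator x_eq)
  also have "Dxp mul v p (dr A) x = dr (Dxp mul v p A) x"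
    unfolding Dxp_eq_xp_operator dr_def
    using A x radial_direction slice_directions bounded_linear_mul
    by (intro xp_operator_pd_commute) auto
  also have "\<dots> = dr (\<lambda>z. dr B z + (2 * real k / snd z) *\<^sub>R B z) x"
    using x identity by (intro dr_cong) (auto simp: algebra_simps)
  also have "\<dots> = vderiv (\<lambda>t. vderiv \<beta> t + (2 * real k / t) *\<^sub>R \<beta> t) r"
    by (simp add: x_eq dr_eq_vderiv \<beta>_def)
  finally have "Dxp mul v p (\<lambda>z. (1 / snd z) *\<^sub>R dr A z) x
      = (1 / r) *\<^sub>R vderiv (\<lambda>t. vderiv \<beta> t + (2 * real k / t) *\<^sub>R \<beta> t) r" .
  moreover have "open {t. (y, t) \<in> S}" "r \<in> {t. (y, t) \<in> S}" "\<forall>t\<in>{t. (y, t) \<in> S}. 0 < t"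
    using open_radial_line x x_eq positive by auto
  moreover have "\<forall>t\<in>{t. (y, t) \<in> S}. \<beta> differentiable (at t)"
    unfolding \<beta>_def using differentiable_radial_line[OF B] by blast
  moreover have "vderiv \<beta> = (\<lambda>t. dr B (y, t))"
    by (simp add: \<beta>_def dr_eq_vderiv fun_eq_iff)
  then have "vderiv \<beta> differentiable (at r)"
    using differentiable_radial_line[OF Ck_on_dr[OF B]] x x_eq by simp
  ultimately show ?thesis
    using vderiv_radial_identity[of "{t. (y, t) \<in> S}" r \<beta> k]
    by (simp add: x_eq dr_eq_vderiv \<beta>_def)
qed

lemma Dxp_bar_step:
  assumes A: "\<And>n. Ck_on n U S A" and B: "\<And>n. Ck_on n U S B"
    and identity: "\<And>z. z \<in> S \<Longrightarrow> Dxp_bar mul v p B z + dr A z = 0"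
    and x: "x \<in> S"
  shows "Dxp_bar mul v p (dr (\<lambda>z. (1 / snd z) *\<^sub>R B z)) x + dr (\<lambda>z. (1 / snd z) *\<^sub>R dr A z) x = 0"
proof -
  have "Dxp_bar mul v p (dr (\<lambda>z. (1 / snd z) *\<^sub>R B z)) x
      = dr (Dxp_bar mul v p (\<lambda>z. (1 / snd z) *\<^sub>R B z)) x"
    unfolding Dxp_bar_eq_xp_operator dr_def
    using Ck_on_divide_radius[OF B] x radial_direction slice_directions
    by (intro xp_operator_pd_commute bounded_linear_Dxp_bar_coefficient) auto
  also have "\<dots> = dr (\<lambda>z. - ((1 / snd z) *\<^sub>R dr A z)) x"
  proof (rule dr_cong)
    fix z assume z: "z \<in> S"
    have "(\<lambda>t. B (z + t *\<^sub>R (v s, 0))) differentiable (at 0)" if "s \<le> p" for s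
      using Ck_on_differentiable[OF B slice_directions[OF that] z] .
    from xp_operator_scaleR_radial[OF bounded_linear.linear[OF bounded_linear_Dxp_bar_coefficient]
        this, where f="\<lambda>r. 1 / r"]
    have "Dxp_bar mul v p (\<lambda>z. (1 / snd z) *\<^sub>R B z) z = (1 / snd z) *\<^sub>R Dxp_bar mul v p B z"
      by (simp add: Dxp_bar_eq_xp_operator)
    with identity[OF z] show "Dxp_bar mul v p (\<lambda>z. (1 / snd z) *\<^sub>R B z) z = - ((1 / snd z) *\<^sub>R dr A z)"
      by (simp add: eq_neg_iff_add_eq_0 scaleR_add_right[symmetric])
  qed (rule x)
  also have "\<dots> = - dr (\<lambda>z. (1 / snd z) *\<^sub>R dr A z) x"
    unfolding dr_def[of "\<lambda>z. - ((1 / snd z) *\<^sub>R dr A z)"] dr_def[of "\<lambda>z. (1 / snd z) *\<^sub>R dr A z"]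
    by (intro pd_eqI has_vector_derivative_minus has_pd
        Ck_on_differentiable[OF Ck_on_divide_radius[OF Ck_on_dr[OF A]] radial_direction x])
  finally show ?thesis
    by simp
qed

lemma stem_identities:
  assumes F1: "\<And>n. Ck_on n U S F1" and F2: "\<And>n. Ck_on n U S F2"
    and regular: "\<And>z. z \<in> S \<Longrightarrow> Dxp mul v p F1 z - dr F2 z = 0 \<and> Dxp_bar mul v p F2 z + dr F1 z = 0"
    and x: "x \<in> S"
  shows "Dxp mul v p (Ak_seq F1 k) x - dr (Bk_seq F2 k) x = (2 * real k / snd x) *\<^sub>R Bk_seq F2 k x \<and>
    Dxp_bar mul v p (Bk_seq F2 k) x + dr (Ak_seq F1 k) x = 0"
  using x
proof (induction k arbitrary: x)
  case 0
  then show ?case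
    using regular by simp
next
  case (Suc k)
  show ?case
    using Dxp_step[OF Ck_on_Ak_seq[OF F1] Ck_on_Bk_seq[OF F2] _ Suc.prems]
      Dxp_bar_step[OF Ck_on_Ak_seq[OF F1] Ck_on_Bk_seq[OF F2] _ Suc.prems] Suc.IH
    by simp
qed

end

section \<open>Limits at the axis\<close>

lemma smooth_on_radial_line:
  assumes F: "Cinf_on U D F" and radial: "(0, 1) \<in> U" and line: "\<And>t. t \<in> I \<Longrightarrow> (y, t) \<in> D"
  shows "smooth_on I (\<lambda>t. F (y, t))"
proof -
  have iterate: "(vderiv ^^ n) (\<lambda>t. F (y, t)) = (\<lambda>t. iter_pd (replicate n (0, 1)) F (y, t))" for n
    by (induction n) (simp_all add: dr_eq_vderiv[symmetric] dr_def)
  have "(\<lambda>t. iter_pd (replicate n (0, 1)) F (y, t)) differentiable (at t)" if "t \<in> I" for n t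
  proof -
    have "C1_on U D (iter_pd (replicate n (0, 1)) F)"
      using F radial unfolding Cinf_on_def by (simp add: set_replicate_conv_if)
    then show ?thesis
      using radial line[OF that] differentiable_dr_iff unfolding C1_on_def by blast
  qed
  then show ?thesis
    unfolding smooth_on_def iterate by blast
qed

lemma Ak_seq_radial_extension:
  fixes F :: "'a::banach \<times> real \<Rightarrow> 'a"
  assumes "smooth_on {-d<..<d} (\<lambda>t. F (y, t))" and "\<forall>t\<in>{-d<..<d}. F (y, - t) = F (y, t)"
  shows "\<exists>E. smooth_on {-d<..<d} E \<and> (\<forall>t\<in>{-d<..<d}. E (- t) = E t) \<and>
    (\<forall>t\<in>{0<..<d}. Ak_seq F k (y, t) = E t)"
proof (induction k)
  case 0
  then show ?case
    using assms by auto
next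
  case (Suc k)
  then obtain E where E: "smooth_on {-d<..<d} E" "\<forall>t\<in>{-d<..<d}. E (- t) = E t"
    and Ak: "\<forall>t\<in>{0<..<d}. Ak_seq F k (y, t) = E t"
    by blast
  have "\<forall>t\<in>{-d<..<d}. vderiv E (- t) = - vderiv E t"
    using E by (auto intro: vderiv_of_even smooth_on_differentiable)
  then obtain H where H: "smooth_on {-d<..<d} H" "\<forall>t\<in>{-d<..<d}. H (- t) = H t"
    and divide: "\<forall>t\<in>{-d<..<d}. t \<noteq> 0 \<longrightarrow> H t = (1 / t) *\<^sub>R vderiv E t"
    using smooth_odd_divide[OF smooth_on_vderiv[OF E(1)]] by blast
  have "Ak_seq F (Suc k) (y, t) = H t" if "t \<in> {0<..<d}" for t
  proof -
    have "vderiv (\<lambda>t. Ak_seq F k (y, t)) t = vderiv E t"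
      using Ak that by (intro vderiv_cong_open[of "{0<..<d}"]) auto
    then show ?thesis
      using divide that by (simp add: dr_eq_vderiv)
  qed
  with H show ?case
    by blast
qed

lemma Bk_seq_radial_extension:
  fixes F :: "'a::banach \<times> real \<Rightarrow> 'a"
  assumes "smooth_on {-d<..<d} (\<lambda>t. F (y, t))" and "\<forall>t\<in>{-d<..<d}. F (y, - t) = - F (y, t)"
  shows "\<exists>R. smooth_on {-d<..<d} R \<and> (\<forall>t\<in>{-d<..<d}. R (- t) = - R t) \<and>
    (\<forall>t\<in>{0<..<d}. Bk_seq F k (y, t) = R t)"
proof (induction k)
  case 0
  then show ?case
    using assms by auto
next
  case (Suc k)
  then obtain R where R: "smooth_on {-d<..<d} R" "\<forall>t\<in>{-d<..<d}. R (- t) = - R t"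
    and Bk: "\<forall>t\<in>{0<..<d}. Bk_seq F k (y, t) = R t"
    by blast
  obtain H where H: "smooth_on {-d<..<d} H" "\<forall>t\<in>{-d<..<d}. H (- t) = H t"
    and divide: "\<forall>t\<in>{-d<..<d}. t \<noteq> 0 \<longrightarrow> H t = (1 / t) *\<^sub>R R t"
    using smooth_odd_divide[OF R] by blast
  have "\<forall>t\<in>{-d<..<d}. vderiv H (- t) = - vderiv H t"
    using H by (auto intro: vderiv_of_even smooth_on_differentiable)
  moreover have "Bk_seq F (Suc k) (y, t) = vderiv H t" if "t \<in> {0<..<d}" for t
    using Bk divide that
    by (simp add: dr_eq_vderiv) (intro vderiv_cong_open[of "{0<..<d}"]; auto)
  ultimately show ?case
    using smooth_on_vderiv[OF H(1)] by blast
qed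

lemma tendsto_at_right_cong_interval:
  fixes f g :: "real \<Rightarrow> 'b::topological_space"
  assumes "(f \<longlongrightarrow> l) (at_right 0)" and "0 < d" and "\<And>r. r \<in> {0<..<d} \<Longrightarrow> f r = g r"
  shows "(g \<longlongrightarrow> l) (at_right 0)"
  by (rule Lim_transform_eventually[OF assms(1) eventually_at_rightI[OF _ assms(2)]])
     (simp add: assms(3))

lemma tendsto_at_right_isCont:
  fixes g :: "real \<Rightarrow> 'b::topological_space"
  shows "isCont g 0 \<Longrightarrow> (g \<longlongrightarrow> g 0) (at_right 0)"
  by (simp add: isCont_def tendsto_mono[OF at_le[OF subset_UNIV]])

lemma tendsto_dr_at_right:
  assumes "smooth_on {-d<..<d} E" "0 < d" "\<forall>t\<in>{0<..<d}. G (y, t) = E t"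
  shows "((\<lambda>r. dr G (y, r)) \<longlongrightarrow> vderiv E 0) (at_right 0)"
proof (rule tendsto_at_right_cong_interval[OF tendsto_at_right_isCont assms(2)])
  show "isCont (vderiv E) 0"
    using smooth_on_differentiable[OF smooth_on_vderiv[OF assms(1)], of 0] assms(2)
    by (simp add: differentiable_imp_continuous_within)
  show "vderiv E r = dr G (y, r)" if "r \<in> {0<..<d}" for r
    using assms(3) that by (simp add: dr_eq_vderiv) (intro vderiv_cong_open[of "{0<..<d}"]; auto)
qed

lemma stem_limits_near_axis:
  fixes F1 F2 :: "'a::banach \<times> real \<Rightarrow> 'a"
  assumes \<delta>: "0 < \<delta>"
    and F1: "smooth_on {-\<delta><..<\<delta>} (\<lambda>t. F1 (y, t))" "\<forall>t\<in>{-\<delta><..<\<delta>}. F1 (y, - t) = F1 (y, t)"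
    and F2: "smooth_on {-\<delta><..<\<delta>} (\<lambda>t. F2 (y, t))" "\<forall>t\<in>{-\<delta><..<\<delta>}. F2 (y, - t) = - F2 (y, t)"
    and identities: "\<And>r. r \<in> {0<..<\<delta>} \<Longrightarrow>
      Dxp mul v p (Ak_seq F1 k) (y, r) - dr (Bk_seq F2 k) (y, r) = (2 * real k / r) *\<^sub>R Bk_seq F2 k (y, r) \<and>
      Dxp_bar mul v p (Bk_seq F2 k) (y, r) + dr (Ak_seq F1 k) (y, r) = 0"
  shows "\<exists>a b c d e.
    ((\<lambda>r. Dxp mul v p (Ak_seq F1 k) (y, r)) \<longlongrightarrow> a) (at_right 0) \<and>
    ((\<lambda>r. dr (Bk_seq F2 k) (y, r)) \<longlongrightarrow> b) (at_right 0) \<and>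
    ((\<lambda>r. (2 * real k / r) *\<^sub>R Bk_seq F2 k (y, r)) \<longlongrightarrow> c) (at_right 0) \<and>
    ((\<lambda>r. Dxp_bar mul v p (Bk_seq F2 k) (y, r)) \<longlongrightarrow> d) (at_right 0) \<and>
    ((\<lambda>r. dr (Ak_seq F1 k) (y, r)) \<longlongrightarrow> e) (at_right 0) \<and>
    a - b = c \<and> d + e = 0"
proof -
  obtain E where E: "smooth_on {-\<delta><..<\<delta>} E" and A: "\<forall>t\<in>{0<..<\<delta>}. Ak_seq F1 k (y, t) = E t"
    using Ak_seq_radial_extension[OF F1] by blast
  obtain R where R: "smooth_on {-\<delta><..<\<delta>} R" "\<forall>t\<in>{-\<delta><..<\<delta>}. R (- t) = - R t"
    and B: "\<forall>t\<in>{0<..<\<delta>}. Bk_seq F2 k (y, t) = R t"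
    using Bk_seq_radial_extension[OF F2] by blast
  obtain H where H: "smooth_on {-\<delta><..<\<delta>} H" and divide: "\<forall>t\<in>{-\<delta><..<\<delta>}. t \<noteq> 0 \<longrightarrow> H t = (1 / t) *\<^sub>R R t"
    using smooth_odd_divide[OF R] by blast
  have lim_A: "((\<lambda>r. dr (Ak_seq F1 k) (y, r)) \<longlongrightarrow> vderiv E 0) (at_right 0)"
    by (rule tendsto_dr_at_right[OF E \<delta> A])
  have lim_B: "((\<lambda>r. dr (Bk_seq F2 k) (y, r)) \<longlongrightarrow> vderiv R 0) (at_right 0)"
    by (rule tendsto_dr_at_right[OF R(1) \<delta> B])
  have lim_quotient:
    "((\<lambda>r. (2 * real k / r) *\<^sub>R Bk_seq F2 k (y, r)) \<longlongrightarrow> (2 * real k) *\<^sub>R H 0) (at_right 0)"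
  proof (rule tendsto_at_right_cong_interval[OF tendsto_at_right_isCont \<delta>])
    show "isCont (\<lambda>t. (2 * real k) *\<^sub>R H t) 0"
      using smooth_on_differentiable[OF H, of 0] \<delta>
      by (simp add: differentiable_imp_continuous_within continuous_intros)
  qed (use B divide in auto)
  have "((\<lambda>r. Dxp mul v p (Ak_seq F1 k) (y, r)) \<longlongrightarrow> vderiv R 0 + (2 * real k) *\<^sub>R H 0)
      (at_right 0)"
    by (rule tendsto_at_right_cong_interval[OF tendsto_add[OF lim_B lim_quotient] \<delta>])
       (use identities in \<open>simp add: algebra_simps\<close>)
  moreover have "((\<lambda>r. Dxp_bar mul v p (Bk_seq F2 k) (y, r)) \<longlongrightarrow> - vderiv E 0) (at_right 0)"
  proof (rule tendsto_at_right_cong_interval[OF tendsto_minus[OF lim_A] \<delta>])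
    fix r assume "r \<in> {0<..<\<delta>}"
    then have "Dxp_bar mul v p (Bk_seq F2 k) (y, r) = - dr (Ak_seq F1 k) (y, r)"
      using identities by (simp add: eq_neg_iff_add_eq_0)
    then show "- dr (Ak_seq F1 k) (y, r) = Dxp_bar mul v p (Bk_seq F2 k) (y, r)"
      by simp
  qed
  ultimately show ?thesis
    using lim_A lim_B lim_quotient by (intro exI conjI) (assumption | simp)+
qed

lemma stem_limits_on_axis:
  fixes F1 F2 :: "'a::banach \<times> real \<Rightarrow> 'a"
  assumes domain: "relopen_domain W U S" and radial: "(0, 1) \<in> U"
    and smooth: "Cinf_on U S F1" "Cinf_on U S F2"
    and parity: "\<And>y r. (y, r) \<in> S \<Longrightarrow> F1 (y, - r) = F1 (y, r) \<and> F2 (y, - r) = - F2 (y, r)"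
    and identities: "\<And>y r. (y, r) \<in> S \<Longrightarrow> 0 < r \<Longrightarrow>
      Dxp mul v p (Ak_seq F1 k) (y, r) - dr (Bk_seq F2 k) (y, r) = (2 * real k / r) *\<^sub>R Bk_seq F2 k (y, r) \<and>
      Dxp_bar mul v p (Bk_seq F2 k) (y, r) + dr (Ak_seq F1 k) (y, r) = 0"
    and axis: "(y, 0) \<in> S"
  shows "\<exists>a b c d e.
    ((\<lambda>r. Dxp mul v p (Ak_seq F1 k) (y, r)) \<longlongrightarrow> a) (at_right 0) \<and>
    ((\<lambda>r. dr (Bk_seq F2 k) (y, r)) \<longlongrightarrow> b) (at_right 0) \<and>
    ((\<lambda>r. (2 * real k / r) *\<^sub>R Bk_seq F2 k (y, r)) \<longlongrightarrow> c) (at_right 0) \<and>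
    ((\<lambda>r. Dxp_bar mul v p (Bk_seq F2 k) (y, r)) \<longlongrightarrow> d) (at_right 0) \<and>
    ((\<lambda>r. dr (Ak_seq F1 k) (y, r)) \<longlongrightarrow> e) (at_right 0) \<and>
    a - b = c \<and> d + e = 0"
proof -
  obtain \<delta> where \<delta>: "0 < \<delta>" and line: "\<And>t. t \<in> {-\<delta><..<\<delta>} \<Longrightarrow> (y, t) \<in> S"
    using relopen_domain.radial_interval_in_domain[OF domain axis] radial
      relopen_domain.directions[OF domain] by blast
  show ?thesis
    by (rule stem_limits_near_axis[OF \<delta> smooth_on_radial_line[OF smooth(1) radial line] _
          smooth_on_radial_line[OF smooth(2) radial line]])
       (use parity line identities in auto)
qed

theorem lemma4p5:
  fixes mul :: "'a::euclidean_space \<Rightarrow> 'a \<Rightarrow> 'a" and one :: 'a and cj :: "'a \<Rightarrow> 'a"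
    and v :: "nat \<Rightarrow> 'a" and m p :: nat
    and D :: "('a \<times> real) set" and F1 F2 :: "'a \<times> real \<Rightarrow> 'a"
  assumes alg: "alt_algebra_inv mul one cj"
    and dim: "DIM('a) > 1"
    and SA_ne: "SA mul one cj \<noteq> {}"
    and basis: "slice_basis mul one cj v m"
    and pm: "p < m"
    and D_sub: "D \<subseteq> span (v ` {0..p}) \<times> UNIV"
    and D_open: "openin (top_of_set (span (v ` {0..p}) \<times> UNIV)) D"
    and D_sym: "\<And>y r. (y, r) \<in> D \<Longrightarrow> (y, - r) \<in> D"
    and reg: "gps_regular_stem mul v p D F1 F2"
    and smooth1: "Cinf_on (dirs v p) D F1"
    and smooth2: "Cinf_on (dirs v p) D F2"
  shows "(\<forall>k::nat. \<forall>y r. (y, r) \<in> D \<longrightarrow> r > 0 \<longrightarrow>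
            Dxp mul v p (Ak_seq F1 k) (y, r) - dr (Bk_seq F2 k) (y, r)
              = (2 * real k / r) *\<^sub>R Bk_seq F2 k (y, r) \<and>
            Dxp_bar mul v p (Bk_seq F2 k) (y, r) + dr (Ak_seq F1 k) (y, r) = 0)
       \<and> (\<forall>k::nat. \<forall>y. (y, 0) \<in> D \<longrightarrow>
            (\<exists>a b c d e.
               ((\<lambda>r. Dxp mul v p (Ak_seq F1 k) (y, r)) \<longlongrightarrow> a) (at_right 0) \<and>
               ((\<lambda>r. dr (Bk_seq F2 k) (y, r)) \<longlongrightarrow> b) (at_right 0) \<and>
               ((\<lambda>r. (2 * real k / r) *\<^sub>R Bk_seq F2 k (y, r)) \<longlongrightarrow> c) (at_right 0) \<and>
               ((\<lambda>r. Dxp_bar mul v p (Bk_seq F2 k) (y, r)) \<longlongrightarrow> d) (at_right 0) \<and>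
               ((\<lambda>r. dr (Ak_seq F1 k) (y, r)) \<longlongrightarrow> e) (at_right 0) \<and>
               a - b = c \<and> d + e = 0))"
proof -
  define W where "W = span (v ` {0..p}) \<times> (UNIV :: real set)"
  define S where "S = D \<inter> {x. 0 < snd x}"
  have "bilinear mul"
    using alg by (simp add: alt_algebra_inv_def)
  moreover have "subspace W" "dirs v p \<subseteq> W"
    unfolding W_def dirs_def by (auto intro: subspace_Times subspace_span span_base span_zero)
  moreover have "openin (top_of_set W) S"
    unfolding S_def W_def
    by (intro openin_Int_open[OF D_open] open_Collect_less continuous_on_const
        continuous_on_snd[OF continuous_on_id])
  ultimately interpret stem_domain W "dirs v p" S mul v p
    by unfold_locales (auto simp: dirs_def S_def)
  have "relopen_domain W (dirs v p) D"
    using \<open>subspace W\<close> \<open>dirs v p \<subseteq> W\<close> D_open by unfold_locales (simp_all add: W_def)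
  have smooth: "Ck_on n (dirs v p) S F1" "Ck_on n (dirs v p) S F2" for n
    using smooth1 smooth2 by (auto intro: Cinf_on_imp_Ck_on Cinf_on_subset simp: S_def)
  have regular: "Dxp mul v p F1 z - dr F2 z = 0 \<and> Dxp_bar mul v p F2 z + dr F1 z = 0" if "z \<in> S" for z
    using reg that by (simp add: gps_regular_stem_def S_def)
  show ?thesis
    using stem_identities[OF smooth regular]
      stem_limits_on_axis[OF \<open>relopen_domain W (dirs v p) D\<close> radial_direction smooth1 smooth2] reg
    by (auto simp: S_def gps_regular_stem_def)
qed

end
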